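(* Let $q$ be a prime power, $m\ge 2$ an integer, $n=q^m-1$, and $\delta$ an integer with $2\le\delta\le n$. The primitive, narrow-sense BCH code $\mathcal{BCH}(n,q;\delta)$ over $\mathbf{F}_q$ contains its Euclidean dual code if and only if $$\delta\le \delta_{\max}=q^{\lceil m/2\rceil}-1-(q-2)[m\text{ odd}].$$
   Context: Let $\alpha$ be a primitive element of $\mathbf{F}_{q^m}$ and $n=q^m-1$. For an integer $x$, the $q$-ary cyclotomic coset of $x$ modulo $n$ is $C_x=\{xq^k \bmod n \mid 0\le k<m\}$. For $2\le\delta\le n$, the primitive, narrow-sense BCH code $\mathcal{BCH}(n,q;\delta)$ of designed distance $\delta$ is the cyclic code of length $n$ over $\mathbf{F}_q$ with generator polynomial $g(x)=\prod_{z\in Z}(x-\alpha^z)$, where $Z=C_1\cup\cdots\cup C_{\delta-1}$ is its defining set. The Euclidean dual of $C\subseteq\mathbf{F}_q^n$ is $C^\perp=\{y\in\mathbf{F}_q^n\mid x\cdot y=0\ \forall x\in C\}$. Iverson notation: $[P]=1$ if $P$ holds and $0$ otherwise. *)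

theory Defs
  imports "HOL-Computational_Algebra.Polynomial" "HOL-Computational_Algebra.Primes"
begin

definition prime_power :: "nat \<Rightarrow> bool" where
  "prime_power q \<longleftrightarrow> (\<exists>p k. prime p \<and> k > 0 \<and> q = p ^ k)"

definition iverson :: "bool \<Rightarrow> nat" where
  "iverson P = (if P then 1 else 0)"

definition primitive_elem :: "'b::{field,finite} \<Rightarrow> bool" where
  "primitive_elem a \<longleftrightarrow> a \<noteq> 0 \<and> (\<forall>x. x \<noteq> 0 \<longrightarrow> (\<exists>k::nat. x = a ^ k))"

text \<open>The subfield F_q of F_{q^m}: the fixed points of x |-> x^q.\<close>
definition subfield_Fq :: "nat \<Rightarrow> 'b::{field,finite} set" where
  "subfield_Fq q = {x. x ^ q = x}"

definition cyc_coset :: "nat \<Rightarrow> nat \<Rightarrow> nat \<Rightarrow> nat \<Rightarrow> nat set" where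
  "cyc_coset q m n x = {x * q ^ k mod n | k. k < m}"

definition bch_defset :: "nat \<Rightarrow> nat \<Rightarrow> nat \<Rightarrow> nat set" where
  "bch_defset q m \<delta> = (\<Union>i\<in>{1..<\<delta>}. cyc_coset q m (q ^ m - 1) i)"

definition bch_gen_poly :: "'b::{field,finite} \<Rightarrow> nat \<Rightarrow> nat \<Rightarrow> nat \<Rightarrow> 'b poly" where
  "bch_gen_poly \<alpha> q m \<delta> = (\<Prod>z\<in>bch_defset q m \<delta>. [:- (\<alpha> ^ z), 1:])"

text \<open>Vectors of F_q^n, represented as functions nat => F_{q^m} with values in F_q
  on indices < n and zero elsewhere.\<close>
definition vecs :: "nat \<Rightarrow> nat \<Rightarrow> (nat \<Rightarrow> 'b::{field,finite}) set" where
  "vecs q n = {v. (\<forall>i<n. v i \<in> subfield_Fq q) \<and> (\<forall>i\<ge>n. v i = 0)}"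

definition vec_poly :: "nat \<Rightarrow> (nat \<Rightarrow> 'b::{field,finite}) \<Rightarrow> 'b poly" where
  "vec_poly n v = (\<Sum>i<n. monom (v i) i)"

definition bch_code :: "'b::{field,finite} \<Rightarrow> nat \<Rightarrow> nat \<Rightarrow> nat \<Rightarrow> (nat \<Rightarrow> 'b) set" where
  "bch_code \<alpha> q m \<delta> = {v \<in> vecs q (q ^ m - 1). bch_gen_poly \<alpha> q m \<delta> dvd vec_poly (q ^ m - 1) v}"

definition dual_code :: "nat \<Rightarrow> nat \<Rightarrow> (nat \<Rightarrow> 'b::{field,finite}) set \<Rightarrow> (nat \<Rightarrow> 'b) set" where
  "dual_code q n C = {y \<in> vecs q n. \<forall>x\<in>C. (\<Sum>i<n. x i * y i) = 0}"

end

(*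
  Write n = q^m - 1 and Z for the defining set. For w in Z and beta in F_{q^m}, the trace
  word t(i) = Tr(beta alpha^(i w)) has inner product Tr(beta c(alpha^w)) with any word c,
  so it lies in the dual code. By orthogonality of the characters i |-> alpha^(i e), its
  polynomial evaluated at alpha^s is minus the sum of the conjugates beta^(q^k) over those
  k < m with w q^k + s = 0 (mod n). If Z and -Z are disjoint mod n, the trace words are
  therefore codewords, and a dual word y, being orthogonal to them, satisfies
  Tr(beta y(alpha^w)) = 0 for all beta, whence y(alpha^w) = 0. Otherwise, as a nonzero
  q-polynomial of degree < q^m has a nonroot, some beta makes t a dual word outside the code.

  Z meets -Z iff x q^k + y = 0 (mod n) for some 1 <= x, y < delta and k < m. Exchanging x
  and y replaces k by m - k, so k <= m div 2 may be assumed; then 0 < x q^k + y < n as long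
  as delta <= delta_max, while for delta = delta_max + 1 an explicit pair (x, y) with
  k = m div 2 gives x q^k + y = n.
*)

theory Submission
  imports Defs "HOL-Library.Cardinality" "HOL-Number_Theory.Cong"
begin

section \<open>Arithmetic of the defining set\<close>

lemma power_cong_power_mod:
  fixes q :: nat
  assumes "q > 0"
  shows "[q ^ e = q ^ (e mod m)] (mod q ^ m - 1)"
proof -
  have "[q ^ m = 1] (mod q ^ m - 1)"
    using assms by (simp add: cong_altdef_nat)
  then have "[(q ^ m) ^ (e div m) * q ^ (e mod m) = 1 ^ (e div m) * q ^ (e mod m)] (mod q ^ m - 1)"
    by (intro cong_mult cong_pow cong_refl)
  then show ?thesis
    by (simp flip: power_mult power_add)
qed

lemma mem_bch_defset_iff:
  "z \<in> bch_defset q m \<delta> \<longleftrightarrow>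
     (\<exists>x k. 1 \<le> x \<and> x < \<delta> \<and> k < m \<and> z = x * q ^ k mod (q ^ m - 1))"
  unfolding bch_defset_def cyc_coset_def by auto

lemma bch_defset_subset:
  assumes "1 < q ^ m"
  shows "bch_defset q m \<delta> \<subseteq> {..<q ^ m - 1}"
  using assms by (auto simp: mem_bch_defset_iff)

lemma bch_defset_mult_closed:
  assumes "q > 0" and "z \<in> bch_defset q m \<delta>"
  shows "z * q ^ j mod (q ^ m - 1) \<in> bch_defset q m \<delta>"
proof -
  obtain x k where x: "1 \<le> x" "x < \<delta>" and k: "k < m" and z: "z = x * q ^ k mod (q ^ m - 1)"
    using assms(2) by (auto simp: mem_bch_defset_iff)
  have "[z * q ^ j = x * q ^ (k + j)] (mod q ^ m - 1)"
    unfolding z by (simp add: cong_def mod_mult_left_eq power_add mult.assoc)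
  also have "[x * q ^ (k + j) = x * q ^ ((k + j) mod m)] (mod q ^ m - 1)"
    using assms(1) by (intro cong_mult cong_refl power_cong_power_mod)
  finally have "z * q ^ j mod (q ^ m - 1) = x * q ^ ((k + j) mod m) mod (q ^ m - 1)"
    unfolding cong_def .
  moreover have "(k + j) mod m < m"
    using k by simp
  ultimately show ?thesis
    using x unfolding mem_bch_defset_iff by blast
qed

definition defset_meets_negation :: "nat \<Rightarrow> nat \<Rightarrow> nat \<Rightarrow> bool" where
  "defset_meets_negation q m \<delta> \<longleftrightarrow>
     (\<exists>z\<in>bch_defset q m \<delta>. \<exists>s\<in>bch_defset q m \<delta>. q ^ m - 1 dvd z + s)"

definition cosets_meet_negated :: "nat \<Rightarrow> nat \<Rightarrow> nat \<Rightarrow> bool" where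
  "cosets_meet_negated q m \<delta> \<longleftrightarrow>
     (\<exists>x y k. 1 \<le> x \<and> x < \<delta> \<and> 1 \<le> y \<and> y < \<delta> \<and> k < m \<and> q ^ m - 1 dvd x * q ^ k + y)"

lemma cosets_meet_negated_if_sum_dvd:
  assumes "q > 0" and "z \<in> bch_defset q m \<delta>" and "s \<in> bch_defset q m \<delta>"
    and "q ^ m - 1 dvd z + s"
  shows "cosets_meet_negated q m \<delta>"
proof -
  obtain y b where y: "1 \<le> y" "y < \<delta>" and b: "b < m" and s: "s = y * q ^ b mod (q ^ m - 1)"
    using assms(3) by (auto simp: mem_bch_defset_iff)
  obtain x k where x: "1 \<le> x" "x < \<delta>" and k: "k < m"
    and z: "z * q ^ (m - b) mod (q ^ m - 1) = x * q ^ k mod (q ^ m - 1)"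
    using bch_defset_mult_closed[OF assms(1,2), of "m - b"] unfolding mem_bch_defset_iff by blast
  have "[s * q ^ (m - b) = y * q ^ (b + (m - b))] (mod q ^ m - 1)"
    unfolding s by (simp add: cong_def mod_mult_left_eq power_add mult.assoc)
  also have "[y * q ^ (b + (m - b)) = y * q ^ ((b + (m - b)) mod m)] (mod q ^ m - 1)"
    using assms(1) by (intro cong_mult cong_refl power_cong_power_mod)
  finally have s_cong: "[s * q ^ (m - b) = y] (mod q ^ m - 1)"
    using b by simp
  have z_cong: "[z * q ^ (m - b) = x * q ^ k] (mod q ^ m - 1)"
    using z by (simp add: cong_def)
  have "[(z + s) * q ^ (m - b) = x * q ^ k + y] (mod q ^ m - 1)"
    unfolding distrib_right using z_cong s_cong by (rule cong_add)
  moreover have "q ^ m - 1 dvd (z + s) * q ^ (m - b)"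
    using assms(4) by simp
  ultimately have "q ^ m - 1 dvd x * q ^ k + y"
    by (simp only: cong_dvd_iff)
  then show ?thesis
    unfolding cosets_meet_negated_def using x y k by blast
qed

lemma defset_meets_negation_iff:
  assumes "q > 0" and "m > 0" and "\<delta> \<le> q ^ m - 1"
  shows "defset_meets_negation q m \<delta> \<longleftrightarrow> cosets_meet_negated q m \<delta>"
proof
  assume "defset_meets_negation q m \<delta>"
  then show "cosets_meet_negated q m \<delta>"
    unfolding defset_meets_negation_def using cosets_meet_negated_if_sum_dvd[OF assms(1)] by blast
next
  assume "cosets_meet_negated q m \<delta>"
  then obtain x y k where x: "1 \<le> x" "x < \<delta>" and y: "1 \<le> y" "y < \<delta>" and k: "k < m"
    and dvd: "q ^ m - 1 dvd x * q ^ k + y"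
    unfolding cosets_meet_negated_def by blast
  have "x * q ^ k mod (q ^ m - 1) \<in> bch_defset q m \<delta>"
    using x k by (auto simp: mem_bch_defset_iff)
  moreover have "y \<in> bch_defset q m \<delta>"
    using y assms(2,3) unfolding mem_bch_defset_iff
    by (intro exI[of _ y] exI[of _ 0]) simp
  moreover have "q ^ m - 1 dvd x * q ^ k mod (q ^ m - 1) + y"
    using dvd by (simp add: dvd_eq_mod_eq_0 mod_add_left_eq)
  ultimately show "defset_meets_negation q m \<delta>"
    unfolding defset_meets_negation_def by blast
qed

section \<open>The bound on the designed distance\<close>

lemma dvd_mult_power_add_swap:
  fixes q :: nat
  assumes "q > 0" and "k \<le> m" and "q ^ m - 1 dvd x * q ^ k + y"
  shows "q ^ m - 1 dvd y * q ^ (m - k) + x"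
proof -
  have "[(x * q ^ k + y) * q ^ (m - k) = y * q ^ (m - k) + x * q ^ m] (mod q ^ m - 1)"
    using assms(2) by (simp add: algebra_simps flip: power_add)
  also have "[y * q ^ (m - k) + x * q ^ m = y * q ^ (m - k) + x * 1] (mod q ^ m - 1)"
    using assms(1) by (intro cong_add cong_mult cong_refl) (simp add: cong_altdef_nat)
  finally have "[(x * q ^ k + y) * q ^ (m - k) = y * q ^ (m - k) + x] (mod q ^ m - 1)"
    by simp
  moreover have "q ^ m - 1 dvd (x * q ^ k + y) * q ^ (m - k)"
    using assms(3) by simp
  ultimately show ?thesis
    by (simp only: cong_dvd_iff)
qed

lemma not_cosets_meet_negated_if_small:
  fixes q :: nat
  assumes "q > 0" and "(\<delta> - 1) * (q ^ (m div 2) + 1) < q ^ m - 1"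
  shows "\<not> cosets_meet_negated q m \<delta>"
proof
  have not_dvd: "\<not> q ^ m - 1 dvd x * q ^ j + y"
    if "1 \<le> x" "x < \<delta>" "1 \<le> y" "y < \<delta>" "j \<le> m div 2" for x y j
  proof -
    have "x * q ^ j \<le> (\<delta> - 1) * q ^ (m div 2)"
      using that assms(1) by (intro mult_mono power_increasing) auto
    then have "x * q ^ j + y \<le> (\<delta> - 1) * (q ^ (m div 2) + 1)"
      using that(4) unfolding distrib_left by linarith
    then have "x * q ^ j + y < q ^ m - 1"
      using assms(2) by linarith
    then show ?thesis
      using that(3) by (auto dest: dvd_imp_le)
  qed
  assume "cosets_meet_negated q m \<delta>"
  then obtain x y k where x: "1 \<le> x" "x < \<delta>" and y: "1 \<le> y" "y < \<delta>" and k: "k < m"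
    and dvd: "q ^ m - 1 dvd x * q ^ k + y"
    unfolding cosets_meet_negated_def by blast
  show False
  proof (cases "k \<le> m div 2")
    case True
    then show False
      using not_dvd x y dvd by blast
  next
    case False
    then have "m - k \<le> m div 2"
      by simp
    moreover have "q ^ m - 1 dvd y * q ^ (m - k) + x"
      using dvd_mult_power_add_swap[OF assms(1)] k dvd by simp
    ultimately show False
      using not_dvd x y by blast
  qed
qed

lemma cosets_meet_negated_even_iff:
  fixes q :: nat
  assumes "q \<ge> 2" and "m = 2 * t" and "t \<ge> 1"
  shows "cosets_meet_negated q m \<delta> \<longleftrightarrow> q ^ t - 1 < \<delta>"
proof -
  define D where "D = q ^ t - 1"
  have "q ^ t \<ge> q"
    using assms(1,3) power_increasing[of 1 t q] by simp
  then have Q: "q ^ t = D + 1" and D: "D \<ge> 1"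
    using assms(1) unfolding D_def by linarith+
  have qm: "q ^ m = (D + 1) * (D + 1)"
    unfolding assms(2) Q[symmetric] by (simp add: mult_2 power_add)
  show ?thesis
  proof
    assume meet: "cosets_meet_negated q m \<delta>"
    show "q ^ t - 1 < \<delta>"
    proof (rule ccontr)
      assume "\<not> q ^ t - 1 < \<delta>"
      then have "(\<delta> - 1) * (q ^ (m div 2) + 1) \<le> (D - 1) * (D + 2)"
        using Q assms(2) unfolding D_def by (intro mult_mono) auto
      also have "\<dots> < q ^ m - 1"
        using D unfolding qm by (simp add: algebra_simps)
      finally show False
        using not_cosets_meet_negated_if_small meet assms(1) by simp
    qed
  next
    assume "q ^ t - 1 < \<delta>"
    moreover have "q ^ m - 1 dvd D * q ^ t + D"
      unfolding qm Q by (simp add: algebra_simps)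
    moreover have "t < m"
      using assms(2,3) by simp
    ultimately show "cosets_meet_negated q m \<delta>"
      unfolding cosets_meet_negated_def D_def[symmetric] using D by blast
  qed
qed

lemma cosets_meet_negated_odd_iff:
  fixes q :: nat
  assumes "q \<ge> 2" and "m = 2 * t + 1" and "t \<ge> 1"
  shows "cosets_meet_negated q m \<delta> \<longleftrightarrow> q ^ (t + 1) - q + 1 < \<delta>"
proof -
  define Q where "Q = q ^ t"
  have "Q \<ge> q"
    using assms(1,3) power_increasing[of 1 t q] unfolding Q_def by simp
  then obtain s where Q: "Q = s + q"
    using le_Suc_ex by (metis add.commute)
  obtain r where q: "q = r + 2"
    using assms(1) le_Suc_ex by (metis add.commute)
  have qm: "q ^ m = Q * Q * q" and qt: "q ^ (t + 1) = Q * q"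
    unfolding assms(2) Q_def by (simp_all add: mult_2 power_add)
  show ?thesis
  proof
    assume meet: "cosets_meet_negated q m \<delta>"
    show "q ^ (t + 1) - q + 1 < \<delta>"
    proof (rule ccontr)
      assume "\<not> q ^ (t + 1) - q + 1 < \<delta>"
      then have "(\<delta> - 1) * (q ^ (m div 2) + 1) \<le> (Q * q - q) * (Q + 1)"
        using assms(2) unfolding qt Q_def by (intro mult_mono) auto
      also have "\<dots> < q ^ m - 1"
        unfolding qm unfolding Q q by (simp add: algebra_simps)
      finally show False
        using not_cosets_meet_negated_if_small meet assms(1) by simp
    qed
  next
    assume less: "q ^ (t + 1) - q + 1 < \<delta>"
    define x y where "x = Q * q - q + 1" and "y = Q * q - Q - 1"
    have "x * Q + y = Q * Q * q - 1"
      unfolding x_def y_def Q q by (simp add: algebra_simps)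
    then have "q ^ m - 1 dvd x * q ^ t + y"
      unfolding qm Q_def by simp
    moreover have "1 \<le> y" and "y \<le> x"
      unfolding x_def y_def Q q by (simp_all add: algebra_simps)
    moreover have "x < \<delta>"
      using less unfolding x_def qt .
    moreover have "t < m"
      using assms(2) by simp
    ultimately show "cosets_meet_negated q m \<delta>"
      unfolding cosets_meet_negated_def x_def by (meson le_add2 le_less_trans)
  qed
qed

lemma delta_max_cases:
  fixes q :: nat
  assumes "q \<ge> 2"
  shows "q ^ ((m + 1) div 2) - 1 - (q - 2) * iverson (odd m) =
    (if even m then q ^ (m div 2) - 1 else q ^ (m div 2 + 1) - q + 1)"
proof (cases "even m")
  case False
  then have "(m + 1) div 2 = m div 2 + 1"
    by presburger
  moreover have "q ^ (m div 2 + 1) \<ge> q"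
    using assms by simp
  ultimately show ?thesis
    using False assms by (simp add: iverson_def Suc_diff_le del: power_Suc)
qed (simp add: iverson_def)

theorem not_cosets_meet_negated_iff:
  fixes q :: nat
  assumes "q \<ge> 2" and "m \<ge> 2"
  shows "\<not> cosets_meet_negated q m \<delta> \<longleftrightarrow>
    \<delta> \<le> q ^ ((m + 1) div 2) - 1 - (q - 2) * iverson (odd m)"
proof (cases "even m")
  case True
  then have "m = 2 * (m div 2)" and "m div 2 \<ge> 1"
    using assms(2) by auto
  then have "cosets_meet_negated q m \<delta> \<longleftrightarrow> q ^ (m div 2) - 1 < \<delta>"
    by (rule cosets_meet_negated_even_iff[OF assms(1)])
  then show ?thesis
    using delta_max_cases[OF assms(1), of m] True by (simp add: not_less)
next
  case False
  then have "m = 2 * (m div 2) + 1" and "m div 2 \<ge> 1"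
    using assms(2) by presburger+
  then have "cosets_meet_negated q m \<delta> \<longleftrightarrow> q ^ (m div 2 + 1) - q + 1 < \<delta>"
    by (rule cosets_meet_negated_odd_iff[OF assms(1)])
  then show ?thesis
    using delta_max_cases[OF assms(1), of m] False by (simp add: not_less)
qed

section \<open>Finite fields\<close>

lemma of_nat_card_eq_0: "of_nat CARD('a) = (0 :: 'a::{ring_1,finite})"
proof -
  have "(\<Sum>x\<in>UNIV. x + 1) = (\<Sum>x\<in>UNIV. x :: 'a)"
    by (rule sum.reindex_bij_witness[of _ "\<lambda>y. y - 1" "\<lambda>y. y + 1"]) auto
  then show ?thesis
    by (simp add: sum.distrib)
qed

lemma of_nat_card_minus_1: "of_nat (CARD('a) - 1) = (-1 :: 'a::{ring_1,finite})"
proof -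
  note of_nat_card_eq_0
  moreover have "CARD('a) \<ge> 1"
    using finite_UNIV_card_ge_0[where ?'a = 'a] by simp
  ultimately show ?thesis
    by (simp add: of_nat_diff)
qed

lemma primitive_elem_order_le:
  fixes \<alpha> :: "'a::{field,finite}"
  assumes "primitive_elem \<alpha>" and "\<alpha> ^ d = 1" and "d > 0"
  shows "CARD('a) - 1 \<le> d"
proof -
  have "UNIV - {0} \<subseteq> (\<lambda>k. \<alpha> ^ k) ` {..<d}"
  proof
    fix x :: 'a
    assume "x \<in> UNIV - {0}"
    then obtain k where "x = \<alpha> ^ k"
      using assms(1) unfolding primitive_elem_def by blast
    also have "\<alpha> ^ k = (\<alpha> ^ d) ^ (k div d) * \<alpha> ^ (k mod d)"
      by (simp flip: power_mult power_add)
    finally show "x \<in> (\<lambda>k. \<alpha> ^ k) ` {..<d}"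
      using assms(2,3) by simp
  qed
  then have "card (UNIV - {0 :: 'a}) \<le> d"
    using surj_card_le[of "{..<d}"] by (metis card_lessThan finite_lessThan)
  then show ?thesis
    by (simp add: card_Diff_singleton)
qed

lemma primitive_elem_power_card_minus_1:
  fixes \<alpha> :: "'a::{field,finite}"
  assumes "primitive_elem \<alpha>"
  shows "\<alpha> ^ (CARD('a) - 1) = 1"
proof -
  have "card ((\<lambda>k. \<alpha> ^ k) ` {..CARD('a) - 1}) \<le> card (UNIV - {0 :: 'a})"
    using assms unfolding primitive_elem_def by (intro card_mono) auto
  also have "\<dots> < card {..CARD('a) - 1}"
    by (simp add: card_Diff_singleton)
  finally obtain i j where ij: "i < j" "j \<le> CARD('a) - 1" and "\<alpha> ^ i = \<alpha> ^ j"
    using pigeonhole[of "\<lambda>k. \<alpha> ^ k"] unfolding inj_on_def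
    by (metis atMost_iff linorder_neqE_nat)
  have "\<alpha> ^ i * \<alpha> ^ (j - i) = \<alpha> ^ j"
    using ij(1) by (simp flip: power_add)
  then have "\<alpha> ^ i * \<alpha> ^ (j - i) = \<alpha> ^ i * 1"
    using \<open>\<alpha> ^ i = \<alpha> ^ j\<close> by simp
  then have "\<alpha> ^ (j - i) = 1"
    using assms unfolding primitive_elem_def by simp
  then have "CARD('a) - 1 \<le> j - i"
    using primitive_elem_order_le[OF assms] ij by simp
  then have "j - i = CARD('a) - 1"
    using ij by linarith
  with \<open>\<alpha> ^ (j - i) = 1\<close> show ?thesis
    by simp
qed

lemma primitive_elem_power_eq_1_iff:
  fixes \<alpha> :: "'a::{field,finite}"
  assumes "primitive_elem \<alpha>"
  shows "\<alpha> ^ e = 1 \<longleftrightarrow> CARD('a) - 1 dvd e"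
proof
  assume "\<alpha> ^ e = 1"
  moreover have "\<alpha> ^ e = (\<alpha> ^ (CARD('a) - 1)) ^ (e div (CARD('a) - 1)) * \<alpha> ^ (e mod (CARD('a) - 1))"
    by (simp flip: power_mult power_add)
  ultimately have "\<alpha> ^ (e mod (CARD('a) - 1)) = 1"
    using primitive_elem_power_card_minus_1[OF assms] by simp
  moreover have "CARD('a) - 1 > 0"
    using card_mono[of UNIV "{0, 1 :: 'a}"] by simp
  ultimately show "CARD('a) - 1 dvd e"
    using primitive_elem_order_le[OF assms, of "e mod (CARD('a) - 1)"] mod_less_divisor
    by (metis dvd_eq_mod_eq_0 leD neq0_conv)
next
  assume "CARD('a) - 1 dvd e"
  then show "\<alpha> ^ e = 1"
    using primitive_elem_power_card_minus_1[OF assms] by (auto simp: power_mult)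
qed

lemma primitive_elem_power_inj_on:
  fixes \<alpha> :: "'a::{field,finite}"
  assumes "primitive_elem \<alpha>"
  shows "inj_on (\<lambda>z. \<alpha> ^ z) {..<CARD('a) - 1}"
proof (rule linorder_inj_onI')
  fix i j
  assume "i \<in> {..<CARD('a) - 1}" "j \<in> {..<CARD('a) - 1}" "i < j"
  then have "\<not> CARD('a) - 1 dvd j - i"
    by (auto dest: dvd_imp_le)
  then have "\<alpha> ^ (j - i) \<noteq> 1"
    using primitive_elem_power_eq_1_iff[OF assms] by simp
  moreover have "\<alpha> ^ j = \<alpha> ^ i * \<alpha> ^ (j - i)"
    using \<open>i < j\<close> by (simp flip: power_add)
  moreover have "\<alpha> \<noteq> 0"
    using assms unfolding primitive_elem_def by simp
  ultimately show "\<alpha> ^ i \<noteq> \<alpha> ^ j"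
    by auto
qed

lemma power_card_eq_self:
  fixes \<alpha> x :: "'a::{field,finite}"
  assumes "primitive_elem \<alpha>"
  shows "x ^ CARD('a) = x"
proof (cases "x = 0")
  case False
  then obtain k where x: "x = \<alpha> ^ k"
    using assms unfolding primitive_elem_def by blast
  have "CARD('a) = Suc (CARD('a) - 1)"
    using finite_UNIV_card_ge_0[where ?'a = 'a] by simp
  then have "x ^ CARD('a) = x ^ (CARD('a) - 1) * x"
    by (metis power_Suc2)
  also have "x ^ (CARD('a) - 1) = (\<alpha> ^ (CARD('a) - 1)) ^ k"
    unfolding x by (simp only: power_mult[symmetric] mult.commute)
  finally show ?thesis
    using primitive_elem_power_card_minus_1[OF assms] by simp
qed (use finite_UNIV_card_ge_0[where ?'a = 'a] in simp)

lemma sum_primitive_elem_powers: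
  fixes \<alpha> :: "'a::{field,finite}"
  assumes "primitive_elem \<alpha>"
  shows "(\<Sum>i<CARD('a) - 1. \<alpha> ^ (i * e)) = (if CARD('a) - 1 dvd e then -1 else 0)"
proof (cases "CARD('a) - 1 dvd e")
  case True
  then have "\<alpha> ^ e = 1"
    using primitive_elem_power_eq_1_iff[OF assms] by simp
  then have "\<alpha> ^ (i * e) = 1" for i
    by (simp add: mult.commute power_mult)
  then show ?thesis
    using True of_nat_card_minus_1[where ?'a = 'a] by simp
next
  case False
  then have ne: "\<alpha> ^ e \<noteq> 1"
    using primitive_elem_power_eq_1_iff[OF assms] by simp
  have "(\<Sum>i<CARD('a) - 1. \<alpha> ^ (i * e)) = (\<Sum>i<CARD('a) - 1. (\<alpha> ^ e) ^ i)"
    by (simp only: mult.commute[of _ e] power_mult)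
  also have "\<dots> = ((\<alpha> ^ e) ^ (CARD('a) - 1) - 1) / (\<alpha> ^ e - 1)"
    using ne by (rule geometric_sum)
  also have "(\<alpha> ^ e) ^ (CARD('a) - 1) = (\<alpha> ^ (CARD('a) - 1)) ^ e"
    by (simp only: power_mult[symmetric] mult.commute)
  also have "\<dots> = 1"
    using primitive_elem_power_card_minus_1[OF assms] by simp
  finally show ?thesis
    using False by simp
qed

lemma exists_poly_nonroot:
  fixes p :: "'a::{field,finite} poly"
  assumes "p \<noteq> 0" and "degree p < CARD('a)"
  shows "\<exists>x. poly p x \<noteq> 0"
proof (rule ccontr)
  assume "\<nexists>x. poly p x \<noteq> 0"
  then have "CARD('a) \<le> degree p"
    using card_poly_roots_bound[OF assms(1)] by simp
  with assms(2) show False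
    by simp
qed

lemma prod_linear_factors_dvd:
  fixes p :: "'a::idom poly"
  assumes "finite A" and "\<And>a. a \<in> A \<Longrightarrow> poly p a = 0"
  shows "(\<Prod>a\<in>A. [:- a, 1:]) dvd p"
  using assms
proof (induction A arbitrary: p rule: finite_induct)
  case (insert a A)
  have "[:- a, 1:] dvd p"
    using insert.prems by (simp add: poly_eq_0_iff_dvd)
  then obtain r where p: "p = [:- a, 1:] * r"
    by (elim dvdE)
  have "poly r b = 0" if "b \<in> A" for b
    using insert.prems[of b] that insert.hyps(2) p by auto
  then have "(\<Prod>b\<in>A. [:- b, 1:]) dvd r"
    by (rule insert.IH)
  then have "[:- a, 1:] * (\<Prod>b\<in>A. [:- b, 1:]) dvd p"
    unfolding p by (rule mult_dvd_mono[OF dvd_refl])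
  then show ?case
    by (simp only: prod.insert[OF insert.hyps])
qed simp

lemma subfield_Fq_power:
  assumes "v \<in> subfield_Fq q"
  shows "v ^ q ^ j = v"
proof (induction j)
  case (Suc j)
  then show ?case
    using assms by (simp add: subfield_Fq_def power_mult mult.commute)
qed simp

lemma prime_CHAR_finite_field: "prime CHAR('a::{field,finite})"
  by (rule prime_CHAR_semidom[OF finite_imp_CHAR_pos]) simp

lemma poly_vec_poly: "poly (vec_poly N v) x = (\<Sum>i<N. v i * x ^ i)"
  unfolding vec_poly_def by (simp add: poly_sum poly_monom)

section \<open>Trace codewords and the dual of a BCH code\<close>

definition trace :: "nat \<Rightarrow> nat \<Rightarrow> 'a::comm_ring_1 \<Rightarrow> 'a" where
  "trace q m x = (\<Sum>k<m. x ^ q ^ k)"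

lemma trace_0: "q > 0 \<Longrightarrow> trace q m 0 = 0"
  unfolding trace_def by (simp add: power_0_left)

locale bch_setting =
  fixes \<alpha> :: "'a::{field,finite}" and q m :: nat
  assumes prime_power_q: "prime_power q"
    and m_pos: "m > 0"
    and card_eq: "CARD('a) = q ^ m"
    and primitive: "primitive_elem \<alpha>"
begin

abbreviation n :: nat where "n \<equiv> q ^ m - 1"

lemma q_ge_2: "q \<ge> 2"
proof -
  obtain p k where "prime p" "k > 0" "q = p ^ k"
    using prime_power_q unfolding prime_power_def by blast
  moreover from this have "p \<ge> 2"
    by (simp add: prime_ge_2_nat)
  ultimately have "p ^ 1 \<le> q"
    using power_increasing[of 1 k p] by simp
  with \<open>p \<ge> 2\<close> show ?thesis
    by simp
qed

lemma one_less_q_power: "1 < q ^ m"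
  using q_ge_2 m_pos by (intro one_less_power) auto

lemma card_minus_1_eq: "CARD('a) - 1 = n"
  using card_eq by simp

lemma q_eq_CHAR_power: "\<exists>e. q = CHAR('a) ^ e"
proof -
  obtain p k where p: "prime p" and q: "q = p ^ k"
    using prime_power_q unfolding prime_power_def by blast
  have "CHAR('a) dvd CARD('a)"
    using of_nat_card_eq_0[where ?'a = 'a] by (simp only: of_nat_eq_0_iff_char_dvd)
  then have "CHAR('a) dvd p ^ (k * m)"
    using card_eq q by (simp only: power_mult)
  then have "CHAR('a) = p"
    using prime_CHAR_finite_field p prime_dvd_power primes_dvd_imp_eq by blast
  then show ?thesis
    using q by blast
qed

lemma power_q_power_sum: "(\<Sum>i\<in>A. f i) ^ q ^ j = (\<Sum>i\<in>A. f i ^ q ^ j)"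
  for f :: "'b \<Rightarrow> 'a"
proof -
  obtain e where "q = CHAR('a) ^ e"
    using q_eq_CHAR_power by blast
  then have "q ^ j = CHAR('a) ^ (e * j)"
    by (simp add: power_mult)
  then show ?thesis
    by (rule freshmans_dream_sum'[OF prime_CHAR_finite_field])
qed

lemma trace_in_subfield_Fq: "trace q m x \<in> subfield_Fq q"
  for x :: 'a
proof -
  have "trace q m x ^ q ^ 1 = (\<Sum>k<m. x ^ q ^ Suc k)"
    unfolding trace_def power_q_power_sum by (simp only: power_one_right power_Suc2 power_mult)
  also have "\<dots> = (\<Sum>k<Suc m. x ^ q ^ k) - x"
    by (simp only: sum.lessThan_Suc_shift power_0 power_one_right add_diff_cancel_left')
  also have "\<dots> = trace q m x"
    using power_card_eq_self[OF primitive, of x] card_eq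
    unfolding trace_def sum.lessThan_Suc by simp
  finally show ?thesis
    by (simp add: subfield_Fq_def)
qed

lemma exists_linearized_nonroot:
  assumes "K \<subseteq> {..<m}" and "0 \<in> K"
  shows "\<exists>\<beta>. (\<Sum>k\<in>K. \<beta> ^ q ^ k) \<noteq> (0 :: 'a)"
proof -
  define P :: "'a poly" where "P = (\<Sum>k\<in>K. monom 1 (q ^ k))"
  have "finite K"
    using assms(1) finite_subset by blast
  have "q ^ k = 1 \<longleftrightarrow> k = 0" for k
    using q_ge_2 by simp
  then have "coeff P 1 = 1"
    unfolding P_def coeff_sum coeff_monom using \<open>finite K\<close> assms(2)
    by (simp add: sum.delta')
  then have "P \<noteq> 0"
    by auto
  moreover have "degree P < CARD('a)"
  proof -
    have "q ^ k < q ^ m" if "k \<in> K" for k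
      using that assms(1) q_ge_2 by (intro power_strict_increasing) auto
    then have "coeff P i = 0" if "q ^ m \<le> i" for i
      unfolding P_def coeff_sum coeff_monom using that by (intro sum.neutral ballI) fastforce
    moreover have "q ^ m > 0"
      using q_ge_2 by simp
    ultimately have "degree P \<le> q ^ m - 1"
      by (intro degree_le allI impI) simp
    then show ?thesis
      using card_eq \<open>q ^ m > 0\<close> by linarith
  qed
  ultimately obtain \<beta> where "poly P \<beta> \<noteq> 0"
    using exists_poly_nonroot by blast
  then have "(\<Sum>k\<in>K. \<beta> ^ q ^ k) \<noteq> 0"
    unfolding P_def by (simp add: poly_sum poly_monom)
  then show ?thesis
    by blast
qed

lemma exists_trace_nonzero: "\<exists>\<gamma>. trace q m \<gamma> \<noteq> (0 :: 'a)"
  using exists_linearized_nonroot[of "{..<m}"] m_pos unfolding trace_def by auto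

lemma sum_alpha_powers: "(\<Sum>i<n. \<alpha> ^ (i * e)) = (if n dvd e then -1 else 0)"
  using sum_primitive_elem_powers[OF primitive, of e] unfolding card_minus_1_eq .

lemma bch_gen_poly_dvd_iff:
  "bch_gen_poly \<alpha> q m \<delta> dvd p \<longleftrightarrow> (\<forall>s\<in>bch_defset q m \<delta>. poly p (\<alpha> ^ s) = 0)"
proof -
  have Z: "bch_defset q m \<delta> \<subseteq> {..<CARD('a) - 1}"
    unfolding card_minus_1_eq by (rule bch_defset_subset[OF one_less_q_power])
  then have gen: "bch_gen_poly \<alpha> q m \<delta> = (\<Prod>a\<in>(\<lambda>z. \<alpha> ^ z) ` bch_defset q m \<delta>. [:- a, 1:])"
    unfolding bch_gen_poly_def
    using prod.reindex[OF inj_on_subset[OF primitive_elem_power_inj_on[OF primitive] Z], of "\<lambda>a. [:- a, 1:]"]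
    by (simp add: comp_def)
  have fin: "finite ((\<lambda>z. \<alpha> ^ z) ` bch_defset q m \<delta>)"
    using Z finite_subset by blast
  show ?thesis
  proof (intro iffI ballI)
    fix s
    assume "bch_gen_poly \<alpha> q m \<delta> dvd p" and "s \<in> bch_defset q m \<delta>"
    then have "[:- (\<alpha> ^ s), 1:] dvd p"
      unfolding gen using dvd_prodI[OF fin, of "\<alpha> ^ s" "\<lambda>a. [:- a, 1:]"] dvd_trans by blast
    then show "poly p (\<alpha> ^ s) = 0"
      by (simp add: poly_eq_0_iff_dvd)
  next
    assume "\<forall>s\<in>bch_defset q m \<delta>. poly p (\<alpha> ^ s) = 0"
    then show "bch_gen_poly \<alpha> q m \<delta> dvd p"
      unfolding gen by (intro prod_linear_factors_dvd[OF fin]) blast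
  qed
qed

lemma mem_bch_code_iff:
  "v \<in> bch_code \<alpha> q m \<delta> \<longleftrightarrow>
    v \<in> vecs q n \<and> (\<forall>s\<in>bch_defset q m \<delta>. poly (vec_poly n v) (\<alpha> ^ s) = 0)"
  unfolding bch_code_def bch_gen_poly_dvd_iff by blast

definition trace_word :: "'a \<Rightarrow> nat \<Rightarrow> nat \<Rightarrow> 'a" where
  "trace_word \<beta> w i = (if i < n then trace q m (\<beta> * \<alpha> ^ (i * w)) else 0)"

lemma trace_word_in_vecs: "trace_word \<beta> w \<in> vecs q n"
  unfolding vecs_def trace_word_def using trace_in_subfield_Fq by auto

lemma inner_trace_word:
  assumes "v \<in> vecs q n"
  shows "(\<Sum>i<n. v i * trace_word \<beta> w i) = trace q m (\<beta> * poly (vec_poly n v) (\<alpha> ^ w))"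
proof -
  have conj: "(\<beta> * (v i * (\<alpha> ^ w) ^ i)) ^ q ^ k = v i * (\<beta> * \<alpha> ^ (i * w)) ^ q ^ k"
    if "i < n" for i k
  proof -
    have "v i ^ q ^ k = v i"
      using assms that by (intro subfield_Fq_power) (simp add: vecs_def)
    moreover have "(\<alpha> ^ w) ^ i = \<alpha> ^ (i * w)"
      by (simp add: power_mult[symmetric] mult.commute)
    ultimately show ?thesis
      by (simp add: power_mult_distrib mult_ac)
  qed
  have "trace q m (\<beta> * poly (vec_poly n v) (\<alpha> ^ w)) =
      (\<Sum>k<m. \<Sum>i<n. (\<beta> * (v i * (\<alpha> ^ w) ^ i)) ^ q ^ k)"
    unfolding trace_def poly_vec_poly sum_distrib_left by (simp only: power_q_power_sum)
  also have "\<dots> = (\<Sum>k<m. \<Sum>i<n. v i * (\<beta> * \<alpha> ^ (i * w)) ^ q ^ k)"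
    using conj by simp
  also have "\<dots> = (\<Sum>i<n. v i * trace_word \<beta> w i)"
    by (subst sum.swap) (simp add: trace_word_def trace_def sum_distrib_left)
  finally show ?thesis ..
qed

lemma poly_trace_word:
  "poly (vec_poly n (trace_word \<beta> w)) (\<alpha> ^ s) =
    - (\<Sum>k | k < m \<and> n dvd w * q ^ k + s. \<beta> ^ q ^ k)"
proof -
  have "(\<beta> * \<alpha> ^ (i * w)) ^ q ^ k * (\<alpha> ^ s) ^ i = \<beta> ^ q ^ k * \<alpha> ^ (i * (w * q ^ k + s))"
    for i k
  proof -
    have "\<alpha> ^ (i * (w * q ^ k + s)) = (\<alpha> ^ (i * w)) ^ q ^ k * (\<alpha> ^ s) ^ i"
      by (simp add: distrib_left power_add mult_ac flip: power_mult)
    then show ?thesis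
      by (simp add: power_mult_distrib mult.assoc)
  qed
  then have "poly (vec_poly n (trace_word \<beta> w)) (\<alpha> ^ s) =
      (\<Sum>i<n. \<Sum>k<m. \<beta> ^ q ^ k * \<alpha> ^ (i * (w * q ^ k + s)))"
    unfolding poly_vec_poly trace_word_def trace_def by (simp add: sum_distrib_right)
  also have "\<dots> = (\<Sum>k<m. \<beta> ^ q ^ k * (\<Sum>i<n. \<alpha> ^ (i * (w * q ^ k + s))))"
    by (subst sum.swap) (simp only: sum_distrib_left)
  also have "\<dots> = (\<Sum>k<m. if n dvd w * q ^ k + s then - (\<beta> ^ q ^ k) else 0)"
    unfolding sum_alpha_powers by (intro sum.cong refl) simp
  also have "\<dots> = - (\<Sum>k | k < m \<and> n dvd w * q ^ k + s. \<beta> ^ q ^ k)"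
    by (simp add: sum.inter_filter[symmetric] sum_negf lessThan_def Collect_conj_eq)
  finally show ?thesis .
qed

lemma trace_word_in_dual_code:
  assumes "z \<in> bch_defset q m \<delta>"
  shows "trace_word \<beta> z \<in> dual_code q n (bch_code \<alpha> q m \<delta>)"
  unfolding dual_code_def
proof (intro CollectI conjI ballI trace_word_in_vecs)
  fix c
  assume "c \<in> bch_code \<alpha> q m \<delta>"
  then have c: "c \<in> vecs q n" and root: "poly (vec_poly n c) (\<alpha> ^ z) = 0"
    using assms by (auto simp: mem_bch_code_iff)
  show "(\<Sum>i<n. c i * trace_word \<beta> z i) = 0"
    unfolding inner_trace_word[OF c] root using q_ge_2 by (simp add: trace_0)
qed

lemma trace_word_in_bch_code:
  assumes "w \<in> bch_defset q m \<delta>" and "\<not> defset_meets_negation q m \<delta>"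
  shows "trace_word \<beta> w \<in> bch_code \<alpha> q m \<delta>"
proof -
  have "poly (vec_poly n (trace_word \<beta> w)) (\<alpha> ^ s) = 0" if "s \<in> bch_defset q m \<delta>" for s
  proof -
    have not_dvd: "\<not> n dvd w * q ^ k + s" for k
    proof
      assume "n dvd w * q ^ k + s"
      then have "n dvd w * q ^ k mod n + s"
        by (simp add: dvd_eq_mod_eq_0 mod_add_left_eq)
      moreover have "w * q ^ k mod n \<in> bch_defset q m \<delta>"
        using bch_defset_mult_closed[of q w m \<delta> k] assms(1) q_ge_2 by simp
      ultimately show False
        using assms(2) that unfolding defset_meets_negation_def by blast
    qed
    have empty: "{k. k < m \<and> n dvd w * q ^ k + s} = {}"
      using not_dvd by blast
    show ?thesis
      unfolding poly_trace_word empty by simp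
  qed
  with trace_word_in_vecs show ?thesis
    unfolding mem_bch_code_iff by blast
qed

lemma not_defset_meets_negation_if_dual_code_subset:
  assumes "dual_code q n (bch_code \<alpha> q m \<delta>) \<subseteq> bch_code \<alpha> q m \<delta>"
  shows "\<not> defset_meets_negation q m \<delta>"
proof
  assume "defset_meets_negation q m \<delta>"
  then obtain z s where z: "z \<in> bch_defset q m \<delta>" and s: "s \<in> bch_defset q m \<delta>"
    and "n dvd z + s"
    unfolding defset_meets_negation_def by blast
  define K where "K = {k. k < m \<and> n dvd z * q ^ k + s}"
  have "K \<subseteq> {..<m}" and "0 \<in> K"
    using \<open>n dvd z + s\<close> m_pos unfolding K_def by auto
  then obtain \<beta> :: 'a where \<beta>: "(\<Sum>k\<in>K. \<beta> ^ q ^ k) \<noteq> 0"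
    using exists_linearized_nonroot by blast
  have "trace_word \<beta> z \<in> bch_code \<alpha> q m \<delta>"
    using assms trace_word_in_dual_code[OF z] by blast
  then have "poly (vec_poly n (trace_word \<beta> z)) (\<alpha> ^ s) = 0"
    using s by (simp add: mem_bch_code_iff)
  with \<beta> show False
    unfolding poly_trace_word K_def[symmetric] by simp
qed

lemma dual_code_subset_if_not_defset_meets_negation:
  assumes "\<not> defset_meets_negation q m \<delta>"
  shows "dual_code q n (bch_code \<alpha> q m \<delta>) \<subseteq> bch_code \<alpha> q m \<delta>"
proof
  fix y
  assume "y \<in> dual_code q n (bch_code \<alpha> q m \<delta>)"
  then have y: "y \<in> vecs q n" and orth: "\<And>c. c \<in> bch_code \<alpha> q m \<delta> \<Longrightarrow> (\<Sum>i<n. c i * y i) = 0"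
    unfolding dual_code_def by auto
  have "poly (vec_poly n y) (\<alpha> ^ w) = 0" if w: "w \<in> bch_defset q m \<delta>" for w
  proof (rule ccontr)
    assume nonzero: "poly (vec_poly n y) (\<alpha> ^ w) \<noteq> 0"
    have "trace q m (\<beta> * poly (vec_poly n y) (\<alpha> ^ w)) = 0" for \<beta>
      using orth[OF trace_word_in_bch_code[OF w assms]] inner_trace_word[OF y]
      by (simp add: mult.commute)
    then have "trace q m (\<gamma> / poly (vec_poly n y) (\<alpha> ^ w) * poly (vec_poly n y) (\<alpha> ^ w)) = 0"
      for \<gamma> .
    then have "trace q m \<gamma> = 0" for \<gamma> :: 'a
      using nonzero by simp
    with exists_trace_nonzero show False
      by blast
  qed
  with y show "y \<in> bch_code \<alpha> q m \<delta>"
    by (simp add: mem_bch_code_iff)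
qed

theorem dual_code_subset_bch_code_iff:
  "dual_code q n (bch_code \<alpha> q m \<delta>) \<subseteq> bch_code \<alpha> q m \<delta> \<longleftrightarrow> \<not> defset_meets_negation q m \<delta>"
  using not_defset_meets_negation_if_dual_code_subset dual_code_subset_if_not_defset_meets_negation
  by blast

end

theorem mainTheorem1:
  fixes \<alpha> :: "'b::{field,finite}" and q m \<delta> :: nat
  assumes "prime_power q" and "m \<ge> 2" and "card (UNIV :: 'b set) = q ^ m"
    and "primitive_elem \<alpha>"
    and "2 \<le> \<delta>" and "\<delta> \<le> q ^ m - 1"
  shows "dual_code q (q ^ m - 1) (bch_code \<alpha> q m \<delta>) \<subseteq> bch_code \<alpha> q m \<delta>
    \<longleftrightarrow> \<delta> \<le> q ^ ((m + 1) div 2) - 1 - (q - 2) * iverson (odd m)"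
proof -
  interpret bch_setting \<alpha> q m
    using assms(1-4) by unfold_locales auto
  have "dual_code q (q ^ m - 1) (bch_code \<alpha> q m \<delta>) \<subseteq> bch_code \<alpha> q m \<delta> \<longleftrightarrow>
      \<not> defset_meets_negation q m \<delta>"
    by (rule dual_code_subset_bch_code_iff)
  also have "\<dots> \<longleftrightarrow> \<not> cosets_meet_negated q m \<delta>"
    using defset_meets_negation_iff q_ge_2 m_pos assms(6) by simp
  also have "\<dots> \<longleftrightarrow> \<delta> \<le> q ^ ((m + 1) div 2) - 1 - (q - 2) * iverson (odd m)"
    using not_cosets_meet_negated_iff[OF q_ge_2 assms(2)] .
  finally show ?thesis .
qed

end
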